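(* For every process $p$ of any LTS and every closed $\varphi\in\mathrm{sHML}$, the following are equivalent: (i) $p\in[\![\varphi]\!]_B$; (ii) every finfinite trace $g$ produced by $p$ satisfies $g\in[\![\varphi]\!]_F$.
   Context: Fix a finite set $\mathrm{Act}$ of actions, $\tau\notin\mathrm{Act}$. $\mathrm{sHML}$: $\varphi::=\mathrm{tt}\mid\mathrm{ff}\mid[A]\varphi\mid\varphi\wedge\varphi\mid\max X.\varphi\mid X$ ($A\subseteq\mathrm{Act}$, guarded). Branching-time semantics over an LTS $(\mathrm{Proc},\mathrm{Act}\cup\{\tau\},\to)$, with $p\overset{a}{\Longrightarrow}q$ iff $p(\xrightarrow{\tau})^*\xrightarrow{a}(\xrightarrow{\tau})^*q$: $[\![\mathrm{tt}]\!]_B=\mathrm{Proc}$, $[\![\mathrm{ff}]\!]_B=\emptyset$, $\wedge$ is intersection, $[\![[A]\varphi,\rho]\!]_B=\{p\mid\forall a\in A,\forall q.\ p\overset{a}{\Longrightarrow}q\Rightarrow q\in[\![\varphi,\rho]\!]_B\}$, $[\![\max X.\varphi,\rho]\!]_B=\bigcup\{S\mid S\subseteq[\![\varphi,\rho[X\mapsto S]]\!]_B\}$, $[\![X,\rho]\!]_B=\rho(X)$. Finfinite traces $\mathrm{Fin}=\mathrm{Act}^\omega\cup\mathrm{Act}^*$; finfinite semantics: $[\![\mathrm{tt}]\!]_F=\mathrm{Fin}$, $[\![\mathrm{ff}]\!]_F=\emptyset$, $\wedge$ intersection, $[\![[A]\varphi,\sigma]\!]_F=\{g\mid\forall a\in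 A,\forall g'.\ g=ag'\Rightarrow g'\in[\![\varphi,\sigma]\!]_F\}$ (so the empty trace satisfies every $[A]\varphi$), $[\![\max X.\varphi,\sigma]\!]_F=\bigcup\{S\subseteq\mathrm{Fin}\mid S\subseteq[\![\varphi,\sigma[X\mapsto S]]\!]_F\}$, $[\![X,\sigma]\!]_F=\sigma(X)$. A process $p$ produces a finite trace $s\in\mathrm{Act}^*$ if $p\overset{s}{\Longrightarrow}q$ for some $q$ (composition of weak steps), and produces an infinite trace $a_1a_2\cdots$ if there are $p=p_0,p_1,\ldots$ with $p_{i-1}\overset{a_i}{\Longrightarrow}p_i$ for all $i\ge1$. *)

theory Defs
  imports Main
begin

datatype ('a, 'v) shml =
    TT
  | FF
  | Box "'a set" "('a, 'v) shml"
  | Conj "('a, 'v) shml" "('a, 'v) shml"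
  | Max 'v "('a, 'v) shml"
  | Var 'v

fun fv :: "('a, 'v) shml \<Rightarrow> 'v set" where
  "fv TT = {}"
| "fv FF = {}"
| "fv (Box A \<phi>) = fv \<phi>"
| "fv (Conj \<phi> \<psi>) = fv \<phi> \<union> fv \<psi>"
| "fv (Max X \<phi>) = fv \<phi> - {X}"
| "fv (Var X) = {X}"

definition closed :: "('a, 'v) shml \<Rightarrow> bool" where
  "closed \<phi> \<longleftrightarrow> fv \<phi> = {}"

fun unguarded_occ :: "'v \<Rightarrow> ('a, 'v) shml \<Rightarrow> bool" where
  "unguarded_occ X TT = False"
| "unguarded_occ X FF = False"
| "unguarded_occ X (Box A \<phi>) = False"
| "unguarded_occ X (Conj \<phi> \<psi>) = (unguarded_occ X \<phi> \<or> unguarded_occ X \<psi>)"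
| "unguarded_occ X (Max Y \<phi>) = (Y \<noteq> X \<and> unguarded_occ X \<phi>)"
| "unguarded_occ X (Var Y) = (X = Y)"

fun guarded :: "('a, 'v) shml \<Rightarrow> bool" where
  "guarded TT = True"
| "guarded FF = True"
| "guarded (Box A \<phi>) = guarded \<phi>"
| "guarded (Conj \<phi> \<psi>) = (guarded \<phi> \<and> guarded \<psi>)"
| "guarded (Max X \<phi>) = (\<not> unguarded_occ X \<phi> \<and> guarded \<phi>)"
| "guarded (Var X) = True"

section \<open>LTS with silent action (None = tau)\<close>

definition tau_steps :: "('p \<Rightarrow> 'a option \<Rightarrow> 'p \<Rightarrow> bool) \<Rightarrow> 'p \<Rightarrow> 'p \<Rightarrow> bool" where
  "tau_steps step = (\<lambda>p q. step p None q)\<^sup>*\<^sup>*"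

definition wstep :: "('p \<Rightarrow> 'a option \<Rightarrow> 'p \<Rightarrow> bool) \<Rightarrow> 'p \<Rightarrow> 'a \<Rightarrow> 'p \<Rightarrow> bool" where
  "wstep step p a q \<longleftrightarrow>
     (\<exists>p' q'. tau_steps step p p' \<and> step p' (Some a) q' \<and> tau_steps step q' q)"

fun wtrace :: "('p \<Rightarrow> 'a option \<Rightarrow> 'p \<Rightarrow> bool) \<Rightarrow> 'p \<Rightarrow> 'a list \<Rightarrow> 'p \<Rightarrow> bool" where
  "wtrace step p [] q = tau_steps step p q"
| "wtrace step p (a # s) q = (\<exists>p'. wstep step p a p' \<and> wtrace step p' s q)"

fun semB :: "('p \<Rightarrow> 'a option \<Rightarrow> 'p \<Rightarrow> bool) \<Rightarrow> ('a, 'v) shml \<Rightarrow> ('v \<Rightarrow> 'p set) \<Rightarrow> 'p set" where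
  "semB step TT \<rho> = UNIV"
| "semB step FF \<rho> = {}"
| "semB step (Conj \<phi> \<psi>) \<rho> = semB step \<phi> \<rho> \<inter> semB step \<psi> \<rho>"
| "semB step (Box A \<phi>) \<rho> =
     {p. \<forall>a\<in>A. \<forall>q. wstep step p a q \<longrightarrow> q \<in> semB step \<phi> \<rho>}"
| "semB step (Max X \<phi>) \<rho> = \<Union>{S. S \<subseteq> semB step \<phi> (\<rho>(X := S))}"
| "semB step (Var X) \<rho> = \<rho> X"

datatype 'a fintrace = FinT "'a list" | InfT "nat \<Rightarrow> 'a"

fun tcons :: "'a \<Rightarrow> 'a fintrace \<Rightarrow> 'a fintrace" where
  "tcons a (FinT s) = FinT (a # s)"
| "tcons a (InfT f) = InfT (\<lambda>n. if n = 0 then a else f (n - 1))"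

fun semF :: "('a, 'v) shml \<Rightarrow> ('v \<Rightarrow> 'a fintrace set) \<Rightarrow> 'a fintrace set" where
  "semF TT \<sigma> = UNIV"
| "semF FF \<sigma> = {}"
| "semF (Conj \<phi> \<psi>) \<sigma> = semF \<phi> \<sigma> \<inter> semF \<psi> \<sigma>"
| "semF (Box A \<phi>) \<sigma> =
     {g. \<forall>a\<in>A. \<forall>g'. g = tcons a g' \<longrightarrow> g' \<in> semF \<phi> \<sigma>}"
| "semF (Max X \<phi>) \<sigma> = \<Union>{S. S \<subseteq> semF \<phi> (\<sigma>(X := S))}"
| "semF (Var X) \<sigma> = \<sigma> X"

definition produces :: "('p \<Rightarrow> 'a option \<Rightarrow> 'p \<Rightarrow> bool) \<Rightarrow> 'p \<Rightarrow> 'a fintrace \<Rightarrow> bool" where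
  "produces step p g \<longleftrightarrow>
     (case g of
        FinT s \<Rightarrow> (\<exists>q. wtrace step p s q)
      | InfT f \<Rightarrow> (\<exists>ps. ps 0 = p \<and> (\<forall>i. wstep step (ps i) (f i) (ps (Suc i)))))"

end

theory Submission
  imports Defs
begin

text \<open>
  Let \<open>trace_sat step T\<close> be the set of processes all of whose finfinite traces lie in \<open>T\<close>.
  By structural induction on the formula, the branching-time semantics under the
  valuation \<open>\<lambda>X. trace_sat step (\<sigma> X)\<close> equals \<open>trace_sat step\<close> applied to the trace semantics
  under \<open>\<sigma>\<close>. The box case holds because the traces of \<open>p\<close> beginning with \<open>a\<close> are exactly
  \<open>a\<close> followed by a trace of some weak \<open>a\<close>-successor of \<open>p\<close>; the fixpoint case holds
  because \<open>trace_sat step\<close> is the right adjoint of taking traces, and a right adjoint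
  that commutes with two monotone maps transports the greatest fixpoint of one to that
  of the other. No process satisfies \<open>trace_sat step {}\<close>, since each one produces the
  empty trace, so the empty valuation is of this form.
\<close>

lemma gfp_transfer:
  fixes R :: "'b::complete_lattice \<Rightarrow> 'a::complete_lattice"
  assumes adjoint: "\<And>S T. S \<le> R T \<longleftrightarrow> L S \<le> T"
    and "mono F" and "mono G"
    and commute: "\<And>T. G (R T) = R (F T)"
  shows "gfp G = R (gfp F)"
proof (rule order.antisym)
  have "gfp G \<le> G (R (L (gfp G)))"
    using adjoint \<open>mono G\<close> by (metis gfp_unfold monoD order_refl)
  then have "L (gfp G) \<le> F (L (gfp G))"
    using adjoint commute by metis
  then have "L (gfp G) \<le> gfp F"
    by (rule gfp_upperbound)
  then show "gfp G \<le> R (gfp F)"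
    using adjoint by blast
next
  have "R (gfp F) \<le> G (R (gfp F))"
    using \<open>mono F\<close> commute by (metis gfp_unfold order_refl)
  then show "R (gfp F) \<le> gfp G"
    by (rule gfp_upperbound)
qed

lemma semB_Max_gfp: "semB step (Max X \<phi>) \<rho> = gfp (\<lambda>S. semB step \<phi> (\<rho>(X := S)))"
  by (simp add: gfp_def)

lemma semF_Max_gfp: "semF (Max X \<phi>) \<sigma> = gfp (\<lambda>S. semF \<phi> (\<sigma>(X := S)))"
  by (simp add: gfp_def)

lemma semB_mono: "(\<And>X. \<rho> X \<subseteq> \<rho>' X) \<Longrightarrow> semB step \<phi> \<rho> \<subseteq> semB step \<phi> \<rho>'"
proof (induction \<phi> arbitrary: \<rho> \<rho>')
  case (Box A \<phi>)
  have "semB step \<phi> \<rho> \<subseteq> semB step \<phi> \<rho>'" by (rule Box.IH) (rule Box.prems)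
  then show ?case by auto
next
  case (Conj \<phi> \<psi>)
  have "semB step \<phi> \<rho> \<subseteq> semB step \<phi> \<rho>'" by (rule Conj.IH) (rule Conj.prems)
  moreover have "semB step \<psi> \<rho> \<subseteq> semB step \<psi> \<rho>'" by (rule Conj.IH) (rule Conj.prems)
  ultimately show ?case by auto
next
  case (Max X \<phi>)
  have "semB step \<phi> (\<rho>(X := S)) \<subseteq> semB step \<phi> (\<rho>'(X := S))" for S
    by (rule Max.IH) (simp add: Max.prems)
  then show ?case
    unfolding semB_Max_gfp by (rule gfp_mono)
qed auto

lemma semF_mono: "(\<And>X. \<sigma> X \<subseteq> \<sigma>' X) \<Longrightarrow> semF \<phi> \<sigma> \<subseteq> semF \<phi> \<sigma>'"
proof (induction \<phi> arbitrary: \<sigma> \<sigma>')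
  case (Box A \<phi>)
  have "semF \<phi> \<sigma> \<subseteq> semF \<phi> \<sigma>'" by (rule Box.IH) (rule Box.prems)
  then show ?case by auto
next
  case (Conj \<phi> \<psi>)
  have "semF \<phi> \<sigma> \<subseteq> semF \<phi> \<sigma>'" by (rule Conj.IH) (rule Conj.prems)
  moreover have "semF \<psi> \<sigma> \<subseteq> semF \<psi> \<sigma>'" by (rule Conj.IH) (rule Conj.prems)
  ultimately show ?case by auto
next
  case (Max X \<phi>)
  have "semF \<phi> (\<sigma>(X := S)) \<subseteq> semF \<phi> (\<sigma>'(X := S))" for S
    by (rule Max.IH) (simp add: Max.prems)
  then show ?case
    unfolding semF_Max_gfp by (rule gfp_mono)
qed auto

lemma mono_semB_upd: "mono (\<lambda>S. semB step \<phi> (\<rho>(X := S)))"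
  by (rule monoI, rule semB_mono) simp

lemma mono_semF_upd: "mono (\<lambda>S. semF \<phi> (\<sigma>(X := S)))"
  by (rule monoI, rule semF_mono) simp

definition traces :: "('p \<Rightarrow> 'a option \<Rightarrow> 'p \<Rightarrow> bool) \<Rightarrow> 'p \<Rightarrow> 'a fintrace set" where
  "traces step p = {g. produces step p g}"

definition trace_sat :: "('p \<Rightarrow> 'a option \<Rightarrow> 'p \<Rightarrow> bool) \<Rightarrow> 'a fintrace set \<Rightarrow> 'p set" where
  "trace_sat step T = {p. traces step p \<subseteq> T}"

lemma subset_trace_sat_iff: "S \<subseteq> trace_sat step T \<longleftrightarrow> (\<Union>p\<in>S. traces step p) \<subseteq> T"
  unfolding trace_sat_def by blast

lemma empty_trace_in_traces: "FinT [] \<in> traces step p"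
  by (auto simp: traces_def produces_def tau_steps_def)

lemma trace_sat_empty: "trace_sat step {} = {}"
  using empty_trace_in_traces by (fastforce simp: trace_sat_def)

lemma produces_InfT_shift:
  "produces step p (InfT (\<lambda>n. if n = 0 then a else f (n - 1))) \<longleftrightarrow>
     (\<exists>q. wstep step p a q \<and> produces step q (InfT f))"
proof
  assume "produces step p (InfT (\<lambda>n. if n = 0 then a else f (n - 1)))"
  then obtain ps where "ps 0 = p"
    and ps: "\<And>i. wstep step (ps i) (if i = 0 then a else f (i - 1)) (ps (Suc i))"
    by (auto simp: produces_def)
  then have "wstep step p a (ps 1)"
    using ps[of 0] by simp
  moreover have "produces step (ps 1) (InfT f)"
    using ps[of "Suc _"] by (auto simp: produces_def intro!: exI[of _ "\<lambda>i. ps (Suc i)"])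
  ultimately show "\<exists>q. wstep step p a q \<and> produces step q (InfT f)"
    by blast
next
  assume "\<exists>q. wstep step p a q \<and> produces step q (InfT f)"
  then obtain ps where "wstep step p a (ps 0)" and "\<And>i. wstep step (ps i) (f i) (ps (Suc i))"
    by (auto simp: produces_def)
  moreover define qs where "qs i = (if i = 0 then p else ps (i - 1))" for i
  ultimately have "wstep step (qs i) (if i = 0 then a else f (i - 1)) (qs (Suc i))" for i
    by (cases i) simp_all
  then show "produces step p (InfT (\<lambda>n. if n = 0 then a else f (n - 1)))"
    unfolding produces_def fintrace.case by (intro exI[of _ qs]) (simp add: qs_def)
qed

lemma produces_tcons:
  "produces step p (tcons a g) \<longleftrightarrow> (\<exists>q. wstep step p a q \<and> produces step q g)"
proof (cases g)
  case (FinT s)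
  then show ?thesis by (fastforce simp: produces_def)
next
  case (InfT f)
  then show ?thesis by (simp add: produces_InfT_shift)
qed

lemma trace_sat_Box:
  "trace_sat step {g. \<forall>a\<in>A. \<forall>g'. g = tcons a g' \<longrightarrow> g' \<in> T} =
     {p. \<forall>a\<in>A. \<forall>q. wstep step p a q \<longrightarrow> q \<in> trace_sat step T}"
  unfolding trace_sat_def traces_def
  by (blast dest: produces_tcons[THEN iffD1] intro: produces_tcons[THEN iffD2])

lemma semB_trace_sat:
  "semB step \<phi> (\<lambda>X. trace_sat step (\<sigma> X)) = trace_sat step (semF \<phi> \<sigma>)"
proof (induction \<phi> arbitrary: \<sigma>)
  case FF
  show ?case by (simp add: trace_sat_empty)
next
  case (Box A \<phi>)
  show ?case by (simp add: Box.IH trace_sat_Box)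
next
  case (Max X \<phi>)
  have upd: "(\<lambda>Y. trace_sat step (\<sigma> Y))(X := trace_sat step T) =
      (\<lambda>Y. trace_sat step ((\<sigma>(X := T)) Y))" for T
    by (simp add: fun_eq_iff)
  have commute: "semB step \<phi> ((\<lambda>Y. trace_sat step (\<sigma> Y))(X := trace_sat step T)) =
          trace_sat step (semF \<phi> (\<sigma>(X := T)))" for T
    unfolding upd by (rule Max.IH)
  show ?case
    unfolding semB_Max_gfp semF_Max_gfp
    by (rule gfp_transfer[where R = "trace_sat step" and L = "\<lambda>S. \<Union>p\<in>S. traces step p"])
      (simp_all add: subset_trace_sat_iff mono_semB_upd mono_semF_upd commute)
qed (auto simp: trace_sat_def)

text \<open>The correspondence holds for every formula.\<close>

theorem mainTheorem17:
  fixes step :: "'p \<Rightarrow> ('a::finite) option \<Rightarrow> 'p \<Rightarrow> bool"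
    and \<phi> :: "('a, 'v) shml"
    and p :: 'p
  assumes "closed \<phi>" and "guarded \<phi>"
  shows "p \<in> semB step \<phi> (\<lambda>_. {}) \<longleftrightarrow>
         (\<forall>g. produces step p g \<longrightarrow> g \<in> semF \<phi> (\<lambda>_. {}))"
proof -
  have "semB step \<phi> (\<lambda>_. {}) = trace_sat step (semF \<phi> (\<lambda>_. {}))"
    using semB_trace_sat[of step \<phi> "\<lambda>_. {}"] by (simp add: trace_sat_empty)
  then show ?thesis
    by (auto simp: trace_sat_def traces_def)
qed

end
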